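(* Let $R$ be a commutative ring with identity. Then $R[X]_A$ is a residually Noetherian ring if and only if $R$ is a residually Noetherian ring.
   Context: $X$ is an indeterminate over $R$, $A=\{f\in R[X]\mid f(0)=1\}$, and $R[X]_A$ is the localization of $R[X]$ at $A$. A ring $T$ is residually Noetherian if $T/\mathfrak p$ is a Noetherian domain for every prime ideal $\mathfrak p$ of $T$. *)

theory Defs
  imports "HOL-Algebra.Algebra"
begin

definition polyA :: "('a, 'm) ring_scheme \<Rightarrow> (nat \<Rightarrow> 'a) set" where
  "polyA R = {f \<in> carrier (UP R). coeff (UP R) f 0 = \<one>\<^bsub>R\<^esub>}"

text \<open>Localization S^{-1}P of a commutative ring P at a multiplicative set S, as fractions a/s.\<close>
definition loc_rel :: "('x, 'n) ring_scheme \<Rightarrow> 'x set \<Rightarrow> (('x \<times> 'x) \<times> ('x \<times> 'x)) set" where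
  "loc_rel P S = {((a, s), (b, t)). a \<in> carrier P \<and> s \<in> S \<and> b \<in> carrier P \<and> t \<in> S \<and>
      (\<exists>u\<in>S. u \<otimes>\<^bsub>P\<^esub> ((a \<otimes>\<^bsub>P\<^esub> t) \<ominus>\<^bsub>P\<^esub> (b \<otimes>\<^bsub>P\<^esub> s)) = \<zero>\<^bsub>P\<^esub>)}"

definition loc_mult :: "('x, 'n) ring_scheme \<Rightarrow> 'x set \<Rightarrow> ('x \<times> 'x) set \<Rightarrow> ('x \<times> 'x) set \<Rightarrow> ('x \<times> 'x) set" where
  "loc_mult P S A B = {z. \<exists>p\<in>A. \<exists>q\<in>B.
      ((fst p \<otimes>\<^bsub>P\<^esub> fst q, snd p \<otimes>\<^bsub>P\<^esub> snd q), z) \<in> loc_rel P S}"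

definition loc_add :: "('x, 'n) ring_scheme \<Rightarrow> 'x set \<Rightarrow> ('x \<times> 'x) set \<Rightarrow> ('x \<times> 'x) set \<Rightarrow> ('x \<times> 'x) set" where
  "loc_add P S A B = {z. \<exists>p\<in>A. \<exists>q\<in>B.
      (((fst p \<otimes>\<^bsub>P\<^esub> snd q) \<oplus>\<^bsub>P\<^esub> (fst q \<otimes>\<^bsub>P\<^esub> snd p),
        snd p \<otimes>\<^bsub>P\<^esub> snd q), z) \<in> loc_rel P S}"

definition localization :: "('x, 'n) ring_scheme \<Rightarrow> 'x set \<Rightarrow> (('x \<times> 'x) set) ring" where
  "localization P S =
    \<lparr> carrier = (carrier P \<times> S) // loc_rel P S,
      monoid.mult = loc_mult P S,
      one = loc_rel P S `` {(\<one>\<^bsub>P\<^esub>, \<one>\<^bsub>P\<^esub>)},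
      ring.zero = loc_rel P S `` {(\<zero>\<^bsub>P\<^esub>, \<one>\<^bsub>P\<^esub>)},
      ring.add = loc_add P S \<rparr>"

definition residually_noetherian :: "('x, 'n) ring_scheme \<Rightarrow> bool" where
  "residually_noetherian T \<longleftrightarrow> (\<forall>p. primeideal p T \<longrightarrow> noetherian_domain (T Quot p))"

end

theory Submission
  imports Defs
begin

text \<open>For a prime \<open>Q\<close> of \<open>R[X]\<^sub>A\<close>, Noetherianity of the quotient is the ascending chain
  condition on ideals above \<open>Q\<close>. Such ideals are determined by their contractions to \<open>R[X]\<close>,
  which contain \<open>p[X]\<close> for the prime \<open>p = Q \<inter> R\<close>; by Hilbert's basis theorem for the Noetherian
  ring \<open>(R/p)[X]\<close> these contractions satisfy the ascending chain condition. Conversely, evaluation at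
  \<open>X = 0\<close> is well defined on \<open>R[X]\<^sub>A\<close>, since every denominator has constant term \<open>1\<close>, and maps it
  onto \<open>R\<close>; residual Noetherianity passes to surjective images because \<open>R/p\<close> is a quotient of
  \<open>R[X]\<^sub>A\<close> by the preimage of \<open>p\<close>.\<close>

section \<open>The ascending chain condition\<close>

definition ascending_chain_condition :: "'x set set \<Rightarrow> bool" where
  "ascending_chain_condition F \<longleftrightarrow>
     (\<forall>J. (\<forall>n. J n \<in> F \<and> J n \<subseteq> J (Suc n)) \<longrightarrow> (\<exists>N. \<forall>n\<ge>N. J n = J N))"

lemma ascending_chain_conditionD:
  assumes "ascending_chain_condition F" "\<And>n. J n \<in> F" "\<And>n. J n \<subseteq> J (Suc n)"
  shows "\<exists>N. \<forall>n\<ge>N. J n = J N"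
  using assms unfolding ascending_chain_condition_def by blast

lemma ascending_chain_condition_iff_chain_Union:
  "ascending_chain_condition F \<longleftrightarrow> (\<forall>C. C \<noteq> {} \<longrightarrow> subset.chain F C \<longrightarrow> \<Union>C \<in> C)"
proof
  assume acc: "ascending_chain_condition F"
  show "\<forall>C. C \<noteq> {} \<longrightarrow> subset.chain F C \<longrightarrow> \<Union>C \<in> C"
  proof (intro allI impI; rule ccontr)
    fix C assume "C \<noteq> {}" and chain: "subset.chain F C" and "\<Union>C \<notin> C"
    have "\<exists>K'. K' \<in> C \<and> K \<subset> K'" if "K \<in> C" for K
    proof -
      have "\<not> \<Union>C \<subseteq> K" using \<open>K \<in> C\<close> \<open>\<Union>C \<notin> C\<close> by (metis Union_upper subset_antisym)
      then obtain x K' where "x \<notin> K" "x \<in> K'" "K' \<in> C" by blast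
      moreover have "K \<subseteq> K' \<or> K' \<subseteq> K"
        using chain \<open>K \<in> C\<close> \<open>K' \<in> C\<close> unfolding subset.chain_def by blast
      ultimately show ?thesis by blast
    qed
    then obtain J where J: "\<And>n. J n \<in> C \<and> J n \<subset> J (Suc n)"
      using \<open>C \<noteq> {}\<close> dependent_nat_choice[of "\<lambda>_ K. K \<in> C" "\<lambda>_ K K'. K \<subset> K'"] by blast
    moreover have "C \<subseteq> F" using chain unfolding subset.chain_def by blast
    ultimately have "\<And>n. J n \<in> F" "\<And>n. J n \<subseteq> J (Suc n)" by auto
    then obtain N where "\<forall>n\<ge>N. J n = J N" using ascending_chain_conditionD[OF acc] by blast
    then show False using J[of N] by (metis le_SucI order_refl psubset_eq)
  qed
next
  assume union: "\<forall>C. C \<noteq> {} \<longrightarrow> subset.chain F C \<longrightarrow> \<Union>C \<in> C"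
  show "ascending_chain_condition F" unfolding ascending_chain_condition_def
  proof (intro allI impI)
    fix J :: "nat \<Rightarrow> _" assume J: "\<forall>n. J n \<in> F \<and> J n \<subseteq> J (Suc n)"
    then have mono: "m \<le> n \<Longrightarrow> J m \<subseteq> J n" for m n by (metis lift_Suc_mono_le)
    have "J m \<subseteq> J n \<or> J n \<subseteq> J m" for m n using mono nat_le_linear by blast
    then have "subset.chain F (range J)" unfolding subset.chain_def using J by blast
    then obtain N where "\<Union>(range J) = J N" using union by blast
    then show "\<exists>N. \<forall>n\<ge>N. J n = J N" using mono by blast
  qed
qed

lemma ascending_chain_condition_vimage:
  assumes "ascending_chain_condition G" and "f ` F \<subseteq> G" and "inj_on f F"
    and "\<And>x y. x \<in> F \<Longrightarrow> y \<in> F \<Longrightarrow> x \<subseteq> y \<Longrightarrow> f x \<subseteq> f y"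
  shows "ascending_chain_condition F"
  unfolding ascending_chain_condition_def
proof (intro allI impI)
  fix J :: "nat \<Rightarrow> _" assume J: "\<forall>n. J n \<in> F \<and> J n \<subseteq> J (Suc n)"
  then have "\<And>n. f (J n) \<in> G" "\<And>n. f (J n) \<subseteq> f (J (Suc n))" using assms(2,4) by auto
  then obtain N where "\<forall>n\<ge>N. f (J n) = f (J N)"
    using ascending_chain_conditionD[OF assms(1), of "\<lambda>n. f (J n)"] by blast
  then have "\<forall>n\<ge>N. J n = J N" using J inj_onD[OF \<open>inj_on f F\<close>] by blast
  then show "\<exists>N. \<forall>n\<ge>N. J n = J N" ..
qed

lemma (in ring) noetherian_ring_iff_ascending_chain_condition:
  "noetherian_ring R \<longleftrightarrow> ascending_chain_condition {I. ideal I R}"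
  using noetherian_ring.ideal_chain_is_trivial trivial_ideal_chain_imp_noetherian
  by (auto simp: ascending_chain_condition_iff_chain_Union)

lemma (in ring) noetherian_quotient_iff_ascending_chain_condition:
  assumes "ideal I R"
  shows "noetherian_ring (R Quot I) \<longleftrightarrow> ascending_chain_condition {J. ideal J R \<and> I \<subseteq> J}"
proof -
  let ?above = "{J. ideal J R \<and> I \<subseteq> J}" and ?quot = "{K. ideal K (R Quot I)}"
  let ?proj = "\<lambda>J. (+>) I ` J"
  have bij: "bij_betw ?proj ?above ?quot" by (rule quot_ideal_correspondence[OF assms])
  have Union_proj: "\<Union> (?proj J) = J" if "J \<in> ?above" for J
    using ideal_incl_iff[OF assms, of J] that by auto
  have proj_Union: "?proj (\<Union> K) = K \<and> \<Union> K \<in> ?above" if "K \<in> ?quot" for K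
  proof -
    have "K \<in> ?proj ` ?above" using bij that by (simp add: bij_betw_def)
    then obtain J where "J \<in> ?above" "K = ?proj J" by blast
    then show ?thesis using Union_proj by auto
  qed
  have "ascending_chain_condition ?quot \<longleftrightarrow> ascending_chain_condition ?above"
  proof
    assume "ascending_chain_condition ?quot"
    then show "ascending_chain_condition ?above"
      by (rule ascending_chain_condition_vimage) (use bij in \<open>auto simp: bij_betw_def\<close>)
  next
    have "inj_on Union ?quot"
    proof (rule inj_onI)
      fix K K' assume "K \<in> ?quot" "K' \<in> ?quot" "\<Union> K = \<Union> K'"
      then show "K = K'" using proj_Union by metis
    qed
    moreover assume "ascending_chain_condition ?above"
    ultimately show "ascending_chain_condition ?quot"
      by (intro ascending_chain_condition_vimage[where f = Union]) (use proj_Union in auto)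
  qed
  moreover have "ring (R Quot I)" using assms by (rule ideal.quotient_is_ring)
  ultimately show ?thesis by (simp add: ring.noetherian_ring_iff_ascending_chain_condition)
qed

lemma residually_noetherian_iff_ascending_chain_condition:
  assumes "cring T"
  shows "residually_noetherian T \<longleftrightarrow>
    (\<forall>p. primeideal p T \<longrightarrow> ascending_chain_condition {J. ideal J T \<and> p \<subseteq> J})"
proof -
  have "noetherian_domain (T Quot p) \<longleftrightarrow> ascending_chain_condition {J. ideal J T \<and> p \<subseteq> J}"
    if "primeideal p T" for p
    using that primeideal.quotient_is_domain[OF that] primeideal.axioms(1)[OF that]
      ring.noetherian_quotient_iff_ascending_chain_condition[OF cring.axioms(1)[OF assms]]
    by (simp add: noetherian_domain_def)
  then show ?thesis unfolding residually_noetherian_def by blast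
qed

lemma residually_noetherian_surjective_image:
  assumes hom: "ring_hom_ring T R h" and "cring T" "cring R"
    and surj: "h ` carrier T = carrier R" and "residually_noetherian T"
  shows "residually_noetherian R"
  unfolding residually_noetherian_iff_ascending_chain_condition[OF \<open>cring R\<close>]
proof (intro allI impI)
  interpret ring_hom_ring T R h by (rule hom)
  fix p assume "primeideal p R"
  let ?vimage = "\<lambda>I. {x \<in> carrier T. h x \<in> I}"
  have "primeideal (?vimage p) T" by (rule primeideal_vimage) fact+
  with assms have acc: "ascending_chain_condition {J. ideal J T \<and> ?vimage p \<subseteq> J}"
    using residually_noetherian_iff_ascending_chain_condition by blast
  have "h ` ?vimage I = I" if "ideal I R" for I
    using surj ideal.Icarr[OF that] by (auto simp: image_iff)
  then have "inj_on ?vimage {I. ideal I R \<and> p \<subseteq> I}" by (metis (mono_tags, lifting) inj_onI mem_Collect_eq)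
  then show "ascending_chain_condition {I. ideal I R \<and> p \<subseteq> I}"
    by (intro ascending_chain_condition_vimage[OF acc]) (auto intro: ideal_vimage)
qed

section \<open>Leading coefficient ideals and Hilbert's basis theorem\<close>

lemma (in cring) idealI_cring:
  assumes "I \<subseteq> carrier R" "\<zero> \<in> I" "\<And>a b. a \<in> I \<Longrightarrow> b \<in> I \<Longrightarrow> a \<oplus> b \<in> I"
    "\<And>a. a \<in> I \<Longrightarrow> \<ominus> a \<in> I" "\<And>a x. a \<in> I \<Longrightarrow> x \<in> carrier R \<Longrightarrow> x \<otimes> a \<in> I"
  shows "ideal I R"
proof (rule idealI)
  show "subgroup I (add_monoid R)"
    by (rule add.subgroupI) (use assms in \<open>auto simp: a_inv_def[symmetric]\<close>)
  show "a \<otimes> x \<in> I" if "a \<in> I" "x \<in> carrier R" for a x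
    using assms(1,5) that by (metis m_comm subsetD)
qed (use assms ring_axioms in auto)

context UP_cring
begin

definition leading_coeff_ideal :: "(nat \<Rightarrow> 'a) set \<Rightarrow> nat \<Rightarrow> 'a set" where
  "leading_coeff_ideal J d = {up_ring.coeff P f d | f. f \<in> J \<and> deg R f \<le> d}"

lemma leading_coeff_idealI:
  "f \<in> J \<Longrightarrow> deg R f \<le> d \<Longrightarrow> up_ring.coeff P f d \<in> leading_coeff_ideal J d"
  unfolding leading_coeff_ideal_def by blast

lemma leading_coeff_idealE:
  assumes "a \<in> leading_coeff_ideal J d"
  obtains f where "f \<in> J" "deg R f \<le> d" "a = up_ring.coeff P f d"
  using assms unfolding leading_coeff_ideal_def by blast

lemma leading_coeff_ideal_is_ideal:
  assumes "ideal J P"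
  shows "ideal (leading_coeff_ideal J d) R"
proof -
  interpret J: ideal J P by fact
  show ?thesis
  proof (rule R.idealI_cring)
    show "leading_coeff_ideal J d \<subseteq> carrier R"
      using J.Icarr by (auto elim: leading_coeff_idealE)
    show "\<zero> \<in> leading_coeff_ideal J d"
      using leading_coeff_idealI[OF J.zero_closed] by simp
  next
    fix a b assume "a \<in> leading_coeff_ideal J d" "b \<in> leading_coeff_ideal J d"
    then obtain f g where fg: "f \<in> J" "deg R f \<le> d" "a = up_ring.coeff P f d"
      "g \<in> J" "deg R g \<le> d" "b = up_ring.coeff P g d"
      by (elim leading_coeff_idealE)
    then have "deg R (f \<oplus>\<^bsub>P\<^esub> g) \<le> d"
      using deg_add[OF J.Icarr[OF fg(1)] J.Icarr[OF fg(4)]] by (meson max.bounded_iff order_trans)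
    from leading_coeff_idealI[OF J.a_closed[OF fg(1,4)] this]
    show "a \<oplus> b \<in> leading_coeff_ideal J d" using fg J.Icarr by simp
  next
    fix a assume "a \<in> leading_coeff_ideal J d"
    then obtain f where f: "f \<in> J" "deg R f \<le> d" "a = up_ring.coeff P f d"
      by (elim leading_coeff_idealE)
    from leading_coeff_idealI[OF J.a_inv_closed[OF f(1)]]
    show "\<ominus> a \<in> leading_coeff_ideal J d" using f J.Icarr by simp
  next
    fix a x assume "a \<in> leading_coeff_ideal J d" and x: "x \<in> carrier R"
    then obtain f where f: "f \<in> J" "deg R f \<le> d" "a = up_ring.coeff P f d"
      by (elim leading_coeff_idealE)
    have "x \<odot>\<^bsub>P\<^esub> f \<in> J"
      using f x J.Icarr by (simp add: monom_mult_is_smult[symmetric] J.I_l_closed)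
    moreover have "deg R (x \<odot>\<^bsub>P\<^esub> f) \<le> d"
      using deg_smult_decr[OF x J.Icarr[OF f(1)]] f(2) by linarith
    ultimately show "x \<otimes> a \<in> leading_coeff_ideal J d"
      using leading_coeff_idealI f x J.Icarr by fastforce
  qed
qed

text \<open>Multiplying by \<open>X\<close> shows that the leading coefficient ideals grow with the degree.\<close>

lemma leading_coeff_ideal_Suc:
  assumes "ideal J P"
  shows "leading_coeff_ideal J d \<subseteq> leading_coeff_ideal J (Suc d)"
proof
  interpret J: ideal J P by fact
  fix a assume "a \<in> leading_coeff_ideal J d"
  then obtain f where f: "f \<in> J" "deg R f \<le> d" "a = up_ring.coeff P f d"
    by (elim leading_coeff_idealE)
  let ?Xf = "up_ring.monom P \<one> 1 \<otimes>\<^bsub>P\<^esub> f"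
  have "?Xf \<in> J" using f by (simp add: J.I_l_closed)
  moreover have "deg R ?Xf \<le> Suc d"
    using deg_mult_ring[of "up_ring.monom P \<one> 1" f] deg_monom_le[of \<one> 1] f J.Icarr by fastforce
  moreover have "up_ring.coeff P ?Xf (Suc d) = a"
    using coeff_monom_mult[of \<one> f 1 d] f J.Icarr by simp
  ultimately show "a \<in> leading_coeff_ideal J (Suc d)"
    using leading_coeff_idealI by metis
qed

lemma leading_coeff_ideal_mono:
  assumes "ideal J' P" "J \<subseteq> J'" "d \<le> k"
  shows "leading_coeff_ideal J d \<subseteq> leading_coeff_ideal J' k"
proof -
  have "leading_coeff_ideal J d \<subseteq> leading_coeff_ideal J' d"
    using assms(2) unfolding leading_coeff_ideal_def by blast
  also have "\<dots> \<subseteq> leading_coeff_ideal J' k"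
    using lift_Suc_mono_le[of "leading_coeff_ideal J'", OF leading_coeff_ideal_Suc[OF assms(1)] assms(3)] .
  finally show ?thesis .
qed

lemma monom_mem_imp_mem_leading_coeff_ideal:
  "a \<in> carrier R \<Longrightarrow> up_ring.monom P a d \<in> J \<Longrightarrow> a \<in> leading_coeff_ideal J d"
  using leading_coeff_idealI[of "up_ring.monom P a d" J d] deg_monom_le by simp

lemma ideal_subset_if_leading_coeff_ideals_subset:
  assumes "ideal J P" "ideal J' P" "J \<subseteq> J'"
    and leading: "\<And>d. leading_coeff_ideal J' d \<subseteq> leading_coeff_ideal J d"
  shows "J' \<subseteq> J"
proof
  interpret J: ideal J P by fact
  interpret J': ideal J' P by fact
  fix f assume "f \<in> J'"
  then show "f \<in> J"
  proof (induction "deg R f" arbitrary: f rule: less_induct)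
    case less
    have f: "f \<in> carrier P" using less.prems J'.Icarr by blast
    have "up_ring.coeff P f (deg R f) \<in> leading_coeff_ideal J' (deg R f)"
      using less.prems by (simp add: leading_coeff_idealI)
    then have "up_ring.coeff P f (deg R f) \<in> leading_coeff_ideal J (deg R f)"
      using leading by blast
    then obtain g where g: "g \<in> J" "deg R g \<le> deg R f" "up_ring.coeff P g (deg R f) = up_ring.coeff P f (deg R f)"
      by (elim leading_coeff_idealE) auto
    have gP: "g \<in> carrier P" using g J.Icarr by blast
    let ?h = "f \<ominus>\<^bsub>P\<^esub> g"
    have "?h \<in> J"
    proof (cases "?h = \<zero>\<^bsub>P\<^esub>")
      case True
      then show ?thesis using J.zero_closed by simp
    next
      case False
      have "deg R ?h \<le> deg R f"
        using deg_add[of f "\<ominus>\<^bsub>P\<^esub> g"] f gP g(2) by (simp add: a_minus_def)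
      moreover have "up_ring.coeff P ?h (deg R f) = \<zero>" using f gP g(3) by simp
      ultimately have "deg R ?h < deg R f"
        using lcoeff_nonzero[OF False] f gP by (metis le_neq_implies_less minus_closed)
      moreover have "?h \<in> J'" using less.prems g \<open>J \<subseteq> J'\<close> by (simp add: J'.a_closed J'.a_inv_closed a_minus_def subsetD)
      ultimately show ?thesis using less.hyps by blast
    qed
    then have "?h \<oplus>\<^bsub>P\<^esub> g \<in> J" using g by (simp add: J.a_closed)
    moreover have "?h \<oplus>\<^bsub>P\<^esub> g = f" using f gP by algebra
    ultimately show "f \<in> J" by simp
  qed
qed

text \<open>Hilbert's basis theorem for \<open>(R/p)[X]\<close>, phrased inside \<open>R[X]\<close>: ideals of \<open>R[X]\<close>
  containing \<open>p[X]\<close> are compared through their leading coefficient ideals, which lie above \<open>p\<close>.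
  Once the diagonal chain \<open>L\<^sub>n(J\<^sub>n)\<close> and the finitely many chains \<open>L\<^sub>d(J\<^sub>n)\<close> with \<open>d\<close> below its
  stabilization index have stabilized, all \<open>L\<^sub>d(J\<^sub>n)\<close> are constant in \<open>n\<close>.\<close>

lemma ascending_chain_condition_polynomial_ideals:
  assumes p: "ideal p R" and acc: "ascending_chain_condition {I. ideal I R \<and> p \<subseteq> I}"
  shows "ascending_chain_condition {J. ideal J P \<and> (\<forall>a\<in>p. \<forall>d. up_ring.monom P a d \<in> J)}"
  unfolding ascending_chain_condition_def
proof (intro allI impI)
  fix J :: "nat \<Rightarrow> (nat \<Rightarrow> 'a) set"
  assume "\<forall>n. J n \<in> {J. ideal J P \<and> (\<forall>a\<in>p. \<forall>d. up_ring.monom P a d \<in> J)} \<and> J n \<subseteq> J (Suc n)"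
  then have J: "\<And>n. ideal (J n) P" "\<And>a n d. a \<in> p \<Longrightarrow> up_ring.monom P a d \<in> J n"
    and J_Suc: "\<And>n. J n \<subseteq> J (Suc n)" by auto
  have J_mono: "m \<le> n \<Longrightarrow> J m \<subseteq> J n" for m n by (rule lift_Suc_mono_le[of J, OF J_Suc])
  let ?LC = "\<lambda>n d. leading_coeff_ideal (J n) d"
  have LC_above: "?LC n d \<in> {I. ideal I R \<and> p \<subseteq> I}" for n d
    using leading_coeff_ideal_is_ideal[OF J(1)] monom_mem_imp_mem_leading_coeff_ideal J(2) ideal.Icarr[OF p]
    by blast
  have LC_mono: "m \<le> n \<Longrightarrow> d \<le> k \<Longrightarrow> ?LC m d \<subseteq> ?LC n k" for m n d k
    using leading_coeff_ideal_mono[OF J(1) J_mono] .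
  have "\<exists>N. \<forall>n\<ge>N. ?LC n n = ?LC N N"
    by (rule ascending_chain_conditionD[OF acc]) (simp_all only: LC_above LC_mono le_SucI)
  then obtain N where N: "\<forall>n\<ge>N. ?LC n n = ?LC N N" ..
  have "\<exists>m. \<forall>n\<ge>m. ?LC n d = ?LC m d" for d
    by (rule ascending_chain_conditionD[OF acc]) (simp_all only: LC_above LC_mono le_SucI order_refl)
  then obtain m where m: "\<And>d n. n \<ge> m d \<Longrightarrow> ?LC n d = ?LC (m d) d" by metis
  define M where "M = N + (\<Sum>d<N. m d)"
  have LC_stable: "?LC n d = ?LC M d" if "M \<le> n" for n d
  proof (cases "d < N")
    case True
    then have "m d \<le> M" unfolding M_def by (simp add: member_le_sum trans_le_add2)
    then show ?thesis using m \<open>M \<le> n\<close> by (metis order_trans)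
  next
    case False
    have "?LC n d \<subseteq> ?LC (max n d) (max n d)" by (rule LC_mono) simp_all
    also have "\<dots> = ?LC N N" by (rule N[rule_format]) (use \<open>M \<le> n\<close> in \<open>simp add: M_def\<close>)
    also have "\<dots> \<subseteq> ?LC M d" using False by (intro LC_mono) (simp_all add: M_def)
    finally show ?thesis using LC_mono[OF \<open>M \<le> n\<close> order_refl] by blast
  qed
  have "J n = J M" if "M \<le> n" for n
    using ideal_subset_if_leading_coeff_ideals_subset[OF J(1) J(1) J_mono[OF that]] LC_stable[OF that]
      J_mono[OF that] by blast
  then show "\<exists>N. \<forall>n\<ge>N. J n = J N" by blast
qed

end

section \<open>Localization at a multiplicative subset\<close>

locale multiplicative_subset = cring P for P (structure) + fixes S
  assumes subset: "S \<subseteq> carrier P" and one_mem: "\<one> \<in> S"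
    and mult_mem: "\<lbrakk>s \<in> S; t \<in> S\<rbrakk> \<Longrightarrow> s \<otimes> t \<in> S"
begin

abbreviation "rel \<equiv> loc_rel P S"
abbreviation "L \<equiv> localization P S"
definition frac :: "'a \<Rightarrow> 'a \<Rightarrow> ('a \<times> 'a) set" where
  "frac a s = rel `` {(a, s)}"

lemma mem_carrier: "s \<in> S \<Longrightarrow> s \<in> carrier P" using subset by blast

lemma rel_iff: "((a,s),(b,t)) \<in> rel \<longleftrightarrow> a\<in>carrier P \<and> s\<in>S \<and> b\<in>carrier P \<and> t\<in>S \<and>
   (\<exists>u\<in>S. u \<otimes> (a \<otimes> t \<ominus> b \<otimes> s) = \<zero>)"
  by (simp add: loc_rel_def)

lemma rel_refl: assumes "a \<in> carrier P" "s \<in> S" shows "((a,s),(a,s)) \<in> rel"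
proof -
  have "\<one> \<otimes> (a \<otimes> s \<ominus> a \<otimes> s) = \<zero>" using assms mem_carrier by (simp add: r_neg a_minus_def)
  thus ?thesis unfolding rel_iff using assms one_mem by blast
qed

lemma rel_sym: assumes "((a,s),(b,t)) \<in> rel" shows "((b,t),(a,s)) \<in> rel"
proof -
  from assms obtain u where h: "a\<in>carrier P" "s\<in>S" "b\<in>carrier P" "t\<in>S" "u\<in>S"
    "u \<otimes> (a \<otimes> t \<ominus> b \<otimes> s) = \<zero>" unfolding rel_iff by blast
  have c: "s \<in> carrier P" "t \<in> carrier P" "u \<in> carrier P" using h mem_carrier by auto
  have "u \<otimes> (b \<otimes> s \<ominus> a \<otimes> t) = \<ominus> (u \<otimes> (a \<otimes> t \<ominus> b \<otimes> s))"
    using h(1,3) c by algebra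
  also have "\<dots> = \<zero>" using h by simp
  finally show ?thesis using h unfolding rel_iff by blast
qed

lemma rel_trans_pairs: assumes "((a,s),(b,t)) \<in> rel" "((b,t),(c,w)) \<in> rel" shows "((a,s),(c,w)) \<in> rel"
proof -
  from assms obtain u v where h: "a\<in>carrier P" "s\<in>S" "b\<in>carrier P" "t\<in>S" "u\<in>S"
    "u \<otimes> (a \<otimes> t \<ominus> b \<otimes> s) = \<zero>" "c \<in> carrier P" "w \<in> S" "v \<in> S"
    "v \<otimes> (b \<otimes> w \<ominus> c \<otimes> t) = \<zero>" unfolding rel_iff by blast
  have cc: "s \<in> carrier P" "t \<in> carrier P" "u \<in> carrier P" "v \<in> carrier P" "w \<in> carrier P"
    using h mem_carrier by auto
  have "u \<otimes> v \<otimes> t \<otimes> (a \<otimes> w \<ominus> c \<otimes> s) =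
      v \<otimes> w \<otimes> (u \<otimes> (a \<otimes> t \<ominus> b \<otimes> s)) \<oplus> u \<otimes> s \<otimes> (v \<otimes> (b \<otimes> w \<ominus> c \<otimes> t))"
    using h(1,3,7) cc by algebra
  also have "\<dots> = \<zero>" using h cc by simp
  finally show ?thesis using h mult_mem unfolding rel_iff by blast
qed

lemma rel_trans: "(x,y) \<in> rel \<Longrightarrow> (y,z) \<in> rel \<Longrightarrow> (x,z) \<in> rel"
  by (cases x, cases y, cases z) (blast intro: rel_trans_pairs)

lemma equiv_rel: "equiv (carrier P \<times> S) rel"
proof (rule equivI)
  show "rel \<subseteq> (carrier P \<times> S) \<times> (carrier P \<times> S)" by (auto simp: loc_rel_def)
  show "refl_on (carrier P \<times> S) rel"
    by (rule refl_onI) (auto intro: rel_refl)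
  show "sym rel" by (rule symI) (auto intro: rel_sym)
  show "trans rel" by (rule transI) (auto intro: rel_trans_pairs)
qed

lemma rel_mult: assumes "((a,s),(a',s')) \<in> rel" "((b,t),(b',t')) \<in> rel"
  shows "((a \<otimes> b, s \<otimes> t),(a' \<otimes> b', s' \<otimes> t')) \<in> rel"
proof -
  from assms obtain u v where h: "a\<in>carrier P" "s\<in>S" "a'\<in>carrier P" "s'\<in>S" "u\<in>S"
    "u \<otimes> (a \<otimes> s' \<ominus> a' \<otimes> s) = \<zero>" "b \<in> carrier P" "t \<in> S" "b' \<in> carrier P" "t' \<in> S" "v \<in> S"
    "v \<otimes> (b \<otimes> t' \<ominus> b' \<otimes> t) = \<zero>" unfolding rel_iff by blast
  have cc: "s \<in> carrier P" "t \<in> carrier P" "u \<in> carrier P" "v \<in> carrier P" "s' \<in> carrier P" "t' \<in> carrier P"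
    using h mem_carrier by auto
  have "u \<otimes> v \<otimes> ((a \<otimes> b) \<otimes> (s' \<otimes> t') \<ominus> (a' \<otimes> b') \<otimes> (s \<otimes> t)) =
      v \<otimes> b \<otimes> t' \<otimes> (u \<otimes> (a \<otimes> s' \<ominus> a' \<otimes> s)) \<oplus> u \<otimes> a' \<otimes> s \<otimes> (v \<otimes> (b \<otimes> t' \<ominus> b' \<otimes> t))"
    using h(1,3,7,9) cc by algebra
  also have "\<dots> = \<zero>" using h cc by simp
  finally show ?thesis using h mult_mem unfolding rel_iff by blast
qed

lemma rel_add: assumes "((a,s),(a',s')) \<in> rel" "((b,t),(b',t')) \<in> rel"
  shows "((a \<otimes> t \<oplus> b \<otimes> s, s \<otimes> t),(a' \<otimes> t' \<oplus> b' \<otimes> s', s' \<otimes> t')) \<in> rel"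
proof -
  from assms obtain u v where h: "a\<in>carrier P" "s\<in>S" "a'\<in>carrier P" "s'\<in>S" "u\<in>S"
    "u \<otimes> (a \<otimes> s' \<ominus> a' \<otimes> s) = \<zero>" "b \<in> carrier P" "t \<in> S" "b' \<in> carrier P" "t' \<in> S" "v \<in> S"
    "v \<otimes> (b \<otimes> t' \<ominus> b' \<otimes> t) = \<zero>" unfolding rel_iff by blast
  have cc: "s \<in> carrier P" "t \<in> carrier P" "u \<in> carrier P" "v \<in> carrier P" "s' \<in> carrier P" "t' \<in> carrier P"
    using h mem_carrier by auto
  have "u \<otimes> v \<otimes> ((a \<otimes> t \<oplus> b \<otimes> s) \<otimes> (s' \<otimes> t') \<ominus> (a' \<otimes> t' \<oplus> b' \<otimes> s') \<otimes> (s \<otimes> t)) =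
      v \<otimes> t \<otimes> t' \<otimes> (u \<otimes> (a \<otimes> s' \<ominus> a' \<otimes> s)) \<oplus> u \<otimes> s \<otimes> s' \<otimes> (v \<otimes> (b \<otimes> t' \<ominus> b' \<otimes> t))"
    using h(1,3,7,9) cc by algebra
  also have "\<dots> = \<zero>" using h cc by simp
  finally show ?thesis using h mult_mem cc unfolding rel_iff by blast
qed

lemma frac_eq_iff: "a \<in> carrier P \<Longrightarrow> s \<in> S \<Longrightarrow> b \<in> carrier P \<Longrightarrow> t \<in> S \<Longrightarrow>
   frac a s = frac b t \<longleftrightarrow> ((a,s),(b,t)) \<in> rel"
  unfolding frac_def using equiv_class_eq_iff[OF equiv_rel] by auto

lemma frac_eqI: assumes "a \<in> carrier P" "s \<in> S" "b \<in> carrier P" "t \<in> S" "a \<otimes> t = b \<otimes> s"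
  shows "frac a s = frac b t"
proof -
  have "\<one> \<otimes> (a \<otimes> t \<ominus> b \<otimes> s) = \<zero>" using assms mem_carrier by simp
  thus ?thesis using assms one_mem by (simp add: frac_eq_iff rel_iff) blast
qed

lemma mem_frac: "x \<in> frac a s \<longleftrightarrow> ((a,s),x) \<in> rel" by (simp add: frac_def)

lemma lift_frac:
  assumes compat: "\<And>x x' y y'. (x,x') \<in> rel \<Longrightarrow> (y,y') \<in> rel \<Longrightarrow> (op x y, op x' y') \<in> rel"
    and "a \<in> carrier P" "s \<in> S" "b \<in> carrier P" "t \<in> S" and op_frac: "op (a,s) (b,t) = (c,d)"
  shows "{z. \<exists>x\<in>frac a s. \<exists>y\<in>frac b t. (op x y, z) \<in> rel} = frac c d"
  unfolding frac_def[of c d] op_frac[symmetric]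
proof (intro equalityI subsetI)
  fix z assume "z \<in> {z. \<exists>x\<in>frac a s. \<exists>y\<in>frac b t. (op x y, z) \<in> rel}"
  then obtain x y where "((a,s),x) \<in> rel" "((b,t),y) \<in> rel" "(op x y, z) \<in> rel"
    by (auto simp: mem_frac)
  then show "z \<in> rel `` {op (a,s) (b,t)}" using compat rel_trans by blast
next
  fix z assume "z \<in> rel `` {op (a,s) (b,t)}"
  moreover have "(a,s) \<in> frac a s" "(b,t) \<in> frac b t" using assms by (simp_all add: mem_frac rel_refl)
  ultimately show "z \<in> {z. \<exists>x\<in>frac a s. \<exists>y\<in>frac b t. (op x y, z) \<in> rel}" by blast
qed

lemma loc_mult_frac:
  "a \<in> carrier P \<Longrightarrow> s \<in> S \<Longrightarrow> b \<in> carrier P \<Longrightarrow> t \<in> S \<Longrightarrow>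
    loc_mult P S (frac a s) (frac b t) = frac (a \<otimes> b) (s \<otimes> t)"
  unfolding loc_mult_def
  by (rule lift_frac[where op = "\<lambda>x y. (fst x \<otimes> fst y, snd x \<otimes> snd y)"])
    (auto intro: rel_mult)

lemma loc_add_frac:
  "a \<in> carrier P \<Longrightarrow> s \<in> S \<Longrightarrow> b \<in> carrier P \<Longrightarrow> t \<in> S \<Longrightarrow>
    loc_add P S (frac a s) (frac b t) = frac (a \<otimes> t \<oplus> b \<otimes> s) (s \<otimes> t)"
  unfolding loc_add_def
  by (rule lift_frac[where op = "\<lambda>x y. (fst x \<otimes> snd y \<oplus> fst y \<otimes> snd x, snd x \<otimes> snd y)"])
    (auto intro: rel_add)

lemma carrier_localization: "carrier L = {frac a s |a s. a \<in> carrier P \<and> s \<in> S}"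
  unfolding localization_def quotient_def frac_def by auto

lemma localization_simps: "monoid.mult L = loc_mult P S" "ring.add L = loc_add P S" "monoid.one L = frac \<one> \<one>" "ring.zero L = frac \<zero> \<one>"
  by (simp_all add: localization_def frac_def)

lemma frac_closed: "a \<in> carrier P \<Longrightarrow> s \<in> S \<Longrightarrow> frac a s \<in> carrier L"
  unfolding carrier_localization by blast

lemma localization_cases: assumes "x \<in> carrier L"
  obtains a s where "a \<in> carrier P" "s \<in> S" "x = frac a s"
  using assms unfolding carrier_localization by blast

lemma frac_mult: "a \<in> carrier P \<Longrightarrow> s \<in> S \<Longrightarrow> b \<in> carrier P \<Longrightarrow> t \<in> S \<Longrightarrow>
  frac a s \<otimes>\<^bsub>L\<^esub> frac b t = frac (a \<otimes> b) (s \<otimes> t)"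
  by (simp add: localization_simps loc_mult_frac)

lemma frac_add: "a \<in> carrier P \<Longrightarrow> s \<in> S \<Longrightarrow> b \<in> carrier P \<Longrightarrow> t \<in> S \<Longrightarrow>
  frac a s \<oplus>\<^bsub>L\<^esub> frac b t = frac (a \<otimes> t \<oplus> b \<otimes> s) (s \<otimes> t)"
  by (simp add: localization_simps loc_add_frac)

lemma abelian_group_localization: "abelian_group L"
proof (rule abelian_groupI)
  fix x y assume "x \<in> carrier L" "y \<in> carrier L"
  then obtain a s b t where h: "a \<in> carrier P" "s \<in> S" "b \<in> carrier P" "t \<in> S"
    "x = frac a s" "y = frac b t" by (metis localization_cases)
  have c: "s \<in> carrier P" "t \<in> carrier P" using h mem_carrier by auto
  show "x \<oplus>\<^bsub>L\<^esub> y \<in> carrier L" using h c mult_mem by (simp add: frac_add frac_closed)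
  have "a \<otimes> t \<oplus> b \<otimes> s = b \<otimes> s \<oplus> a \<otimes> t" "s \<otimes> t = t \<otimes> s" using h c by algebra+
  then show "x \<oplus>\<^bsub>L\<^esub> y = y \<oplus>\<^bsub>L\<^esub> x" using h by (simp add: frac_add)
next
  show "\<zero>\<^bsub>L\<^esub> \<in> carrier L" using one_mem by (simp add: localization_simps frac_closed)
next
  fix x y z assume "x \<in> carrier L" "y \<in> carrier L" "z \<in> carrier L"
  then obtain a s b t c w where h: "a \<in> carrier P" "s \<in> S" "b \<in> carrier P" "t \<in> S"
    "x = frac a s" "y = frac b t" "c \<in> carrier P" "w \<in> S" "z = frac c w" by (metis localization_cases)
  have cc: "s \<in> carrier P" "t \<in> carrier P" "w \<in> carrier P" using h mem_carrier by auto
  have "(a \<otimes> t \<oplus> b \<otimes> s) \<otimes> w \<oplus> c \<otimes> (s \<otimes> t) = a \<otimes> (t \<otimes> w) \<oplus> (b \<otimes> w \<oplus> c \<otimes> t) \<otimes> s"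
    "s \<otimes> t \<otimes> w = s \<otimes> (t \<otimes> w)" using h cc by algebra+
  then show "x \<oplus>\<^bsub>L\<^esub> y \<oplus>\<^bsub>L\<^esub> z = x \<oplus>\<^bsub>L\<^esub> (y \<oplus>\<^bsub>L\<^esub> z)"
    using h cc mult_mem by (simp add: frac_add)
next
  fix x assume "x \<in> carrier L"
  then obtain a s where h: "a \<in> carrier P" "s \<in> S" "x = frac a s" by (metis localization_cases)
  have cc: "s \<in> carrier P" using h mem_carrier by auto
  show "\<zero>\<^bsub>L\<^esub> \<oplus>\<^bsub>L\<^esub> x = x" using h cc one_mem
    by (simp add: localization_simps(4) frac_add)
  have "frac (\<ominus> a) s \<oplus>\<^bsub>L\<^esub> x = frac ((\<ominus> a) \<otimes> s \<oplus> a \<otimes> s) (s \<otimes> s)"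
    using h by (simp add: frac_add)
  also have "\<dots> = frac \<zero> \<one>"
  proof (rule frac_eqI)
    show "((\<ominus> a) \<otimes> s \<oplus> a \<otimes> s) \<otimes> \<one> = \<zero> \<otimes> (s \<otimes> s)" using h cc by algebra
  qed (use h cc one_mem mult_mem in auto)
  finally have "frac (\<ominus> a) s \<oplus>\<^bsub>L\<^esub> x = \<zero>\<^bsub>L\<^esub>" by (simp add: localization_simps)
  thus "\<exists>y\<in>carrier L. y \<oplus>\<^bsub>L\<^esub> x = \<zero>\<^bsub>L\<^esub>" using h frac_closed by blast
qed

lemma comm_monoid_localization: "comm_monoid L"
proof (rule comm_monoidI)
  fix x y assume "x \<in> carrier L" "y \<in> carrier L"
  then obtain a s b t where h: "a \<in> carrier P" "s \<in> S" "b \<in> carrier P" "t \<in> S"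
    "x = frac a s" "y = frac b t" by (metis localization_cases)
  have c: "s \<in> carrier P" "t \<in> carrier P" using h mem_carrier by auto
  show "x \<otimes>\<^bsub>L\<^esub> y \<in> carrier L" using h c mult_mem by (simp add: frac_mult frac_closed)
  show "x \<otimes>\<^bsub>L\<^esub> y = y \<otimes>\<^bsub>L\<^esub> x" using h c by (simp add: frac_mult m_comm)
next
  show "\<one>\<^bsub>L\<^esub> \<in> carrier L" using one_mem by (simp add: localization_simps frac_closed)
next
  fix x y z assume "x \<in> carrier L" "y \<in> carrier L" "z \<in> carrier L"
  then obtain a s b t c w where h: "a \<in> carrier P" "s \<in> S" "b \<in> carrier P" "t \<in> S"
    "x = frac a s" "y = frac b t" "c \<in> carrier P" "w \<in> S" "z = frac c w" by (metis localization_cases)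
  have cc: "s \<in> carrier P" "t \<in> carrier P" "w \<in> carrier P" using h mem_carrier by auto
  show "x \<otimes>\<^bsub>L\<^esub> y \<otimes>\<^bsub>L\<^esub> z = x \<otimes>\<^bsub>L\<^esub> (y \<otimes>\<^bsub>L\<^esub> z)"
    using h cc mult_mem by (simp add: frac_mult m_assoc)
next
  fix x assume "x \<in> carrier L"
  then obtain a s where h: "a \<in> carrier P" "s \<in> S" "x = frac a s" by (metis localization_cases)
  have cc: "s \<in> carrier P" using h mem_carrier by auto
  show "\<one>\<^bsub>L\<^esub> \<otimes>\<^bsub>L\<^esub> x = x" using h cc one_mem by (simp add: localization_simps(3) frac_mult)
qed

lemma localization_distrib:
  assumes "x \<in> carrier L" "y \<in> carrier L" "z \<in> carrier L"
  shows "(x \<oplus>\<^bsub>L\<^esub> y) \<otimes>\<^bsub>L\<^esub> z = x \<otimes>\<^bsub>L\<^esub> z \<oplus>\<^bsub>L\<^esub> y \<otimes>\<^bsub>L\<^esub> z"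
proof -
  obtain a s b t c w where h: "a \<in> carrier P" "s \<in> S" "b \<in> carrier P" "t \<in> S"
    "x = frac a s" "y = frac b t" "c \<in> carrier P" "w \<in> S" "z = frac c w" using assms by (metis localization_cases)
  have cc: "s \<in> carrier P" "t \<in> carrier P" "w \<in> carrier P" using h mem_carrier by auto
  have "(x \<oplus>\<^bsub>L\<^esub> y) \<otimes>\<^bsub>L\<^esub> z = frac ((a \<otimes> t \<oplus> b \<otimes> s) \<otimes> c) (s \<otimes> t \<otimes> w)"
    using h cc by (simp add: frac_add frac_mult mult_mem)
  also have "\<dots> = frac (a \<otimes> c \<otimes> (t \<otimes> w) \<oplus> b \<otimes> c \<otimes> (s \<otimes> w)) (s \<otimes> w \<otimes> (t \<otimes> w))"
  proof (rule frac_eqI)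
    show "(a \<otimes> t \<oplus> b \<otimes> s) \<otimes> c \<otimes> (s \<otimes> w \<otimes> (t \<otimes> w)) =
        (a \<otimes> c \<otimes> (t \<otimes> w) \<oplus> b \<otimes> c \<otimes> (s \<otimes> w)) \<otimes> (s \<otimes> t \<otimes> w)"
      using h cc by algebra
  qed (use h cc mult_mem in auto)
  also have "\<dots> = x \<otimes>\<^bsub>L\<^esub> z \<oplus>\<^bsub>L\<^esub> y \<otimes>\<^bsub>L\<^esub> z"
    using h cc by (simp add: frac_add frac_mult mult_mem)
  finally show ?thesis .
qed

lemma cring_localization: "cring L"
  by (rule cringI[OF abelian_group_localization comm_monoid_localization localization_distrib])

lemma frac_one_ring_hom: "ring_hom_ring P L (\<lambda>a. frac a \<one>)"
proof (rule ring_hom_ringI2[OF ring_axioms cring.axioms(1)[OF cring_localization]])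
  show "(\<lambda>a. frac a \<one>) \<in> ring_hom P L"
    using one_mem by (intro ring_hom_memI) (simp_all add: frac_closed loc_mult_frac loc_add_frac localization_simps)
qed

definition contraction :: "('a \<times> 'a) set set \<Rightarrow> 'a set" where
  "contraction K = {a \<in> carrier P. frac a \<one> \<in> K}"

lemma ideal_contraction: "ideal K L \<Longrightarrow> ideal (contraction K) P"
  unfolding contraction_def by (rule ring_hom_ring.ideal_vimage[OF frac_one_ring_hom])

lemma frac_mem_ideal_iff:
  assumes "ideal K L" "a \<in> carrier P" "s \<in> S"
  shows "frac a s \<in> K \<longleftrightarrow> a \<in> contraction K"
proof -
  interpret K: ideal K L by fact
  have s: "s \<in> carrier P" using assms mem_carrier by blast
  have "frac a s \<otimes>\<^bsub>L\<^esub> frac s \<one> = frac (a \<otimes> s) (s \<otimes> \<one>)"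
    using assms s one_mem by (simp add: frac_mult)
  also have "\<dots> = frac a \<one>"
    by (rule frac_eqI) (use assms s one_mem mult_mem in \<open>simp_all add: m_assoc\<close>)
  finally have "frac a \<one> = frac a s \<otimes>\<^bsub>L\<^esub> frac s \<one>" ..
  then have "frac a s \<in> K \<Longrightarrow> frac a \<one> \<in> K"
    using K.I_r_closed frac_closed[OF s one_mem] by simp
  moreover have "frac a s = frac a \<one> \<otimes>\<^bsub>L\<^esub> frac \<one> s"
    using assms s one_mem by (simp add: frac_mult)
  then have "frac a \<one> \<in> K \<Longrightarrow> frac a s \<in> K"
    using K.I_r_closed frac_closed[OF one_closed assms(3)] by simp
  ultimately show ?thesis using assms(2) unfolding contraction_def by blast
qed

lemma ideal_subset_if_contraction_subset:
  assumes "ideal K L" "ideal K' L" "contraction K \<subseteq> contraction K'"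
  shows "K \<subseteq> K'"
proof
  fix x assume "x \<in> K"
  then obtain a s where "a \<in> carrier P" "s \<in> S" "x = frac a s"
    using ideal.Icarr[OF assms(1)] localization_cases by metis
  with \<open>x \<in> K\<close> show "x \<in> K'" using assms frac_mem_ideal_iff by blast
qed

end

section \<open>The ring \<open>R[X]\<^sub>A\<close>\<close>

context UP_cring
begin

lemma coeff_mult_0:
  "f \<in> carrier P \<Longrightarrow> g \<in> carrier P \<Longrightarrow>
    up_ring.coeff P (f \<otimes>\<^bsub>P\<^esub> g) 0 = up_ring.coeff P f 0 \<otimes> up_ring.coeff P g 0"
  by simp

lemma mem_polyA_iff: "s \<in> polyA R \<longleftrightarrow> s \<in> carrier P \<and> up_ring.coeff P s 0 = \<one>"
  by (simp add: polyA_def P_def)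

lemma multiplicative_subset_polyA: "multiplicative_subset P (polyA R)"
proof (rule multiplicative_subset.intro)
  show "multiplicative_subset_axioms P (polyA R)"
    by unfold_locales (auto simp: mem_polyA_iff coeff_mult_0 simp del: coeff_mult)
qed (rule UP_cring)

end

sublocale UP_cring \<subseteq> A: multiplicative_subset P "polyA R"
  by (rule multiplicative_subset_polyA)

context UP_cring
begin

lemma loc_rel_coeff_0:
  assumes "((f,s),(g,t)) \<in> A.rel"
  shows "up_ring.coeff P f 0 = up_ring.coeff P g 0"
proof -
  from assms obtain u where h: "f \<in> carrier P" "s \<in> polyA R" "g \<in> carrier P" "t \<in> polyA R"
    "u \<in> polyA R" "u \<otimes>\<^bsub>P\<^esub> (f \<otimes>\<^bsub>P\<^esub> t \<ominus>\<^bsub>P\<^esub> g \<otimes>\<^bsub>P\<^esub> s) = \<zero>\<^bsub>P\<^esub>"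
    unfolding A.rel_iff by blast
  have c: "s \<in> carrier P" "t \<in> carrier P" "u \<in> carrier P" "up_ring.coeff P s 0 = \<one>"
    "up_ring.coeff P t 0 = \<one>" "up_ring.coeff P u 0 = \<one>" using h by (simp_all add: mem_polyA_iff)
  have f0: "up_ring.coeff P f 0 \<in> carrier R" "up_ring.coeff P g 0 \<in> carrier R"
    using h(1,3) by simp_all
  have "\<zero> = up_ring.coeff P (u \<otimes>\<^bsub>P\<^esub> (f \<otimes>\<^bsub>P\<^esub> t \<ominus>\<^bsub>P\<^esub> g \<otimes>\<^bsub>P\<^esub> s)) 0"
    using h(6) by simp
  also have "\<dots> = up_ring.coeff P (f \<otimes>\<^bsub>P\<^esub> t) 0 \<ominus> up_ring.coeff P (g \<otimes>\<^bsub>P\<^esub> s) 0"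
    using h(1-5) c by (simp add: coeff_mult_0 del: coeff_mult)
  also have "\<dots> = up_ring.coeff P f 0 \<ominus> up_ring.coeff P g 0"
    using h(1-5) c f0 by (simp add: coeff_mult_0 del: coeff_mult)
  finally show ?thesis using R.r_right_minus_eq[OF f0] by simp
qed

text \<open>By \<open>loc_rel_coeff_0\<close> the value does not depend on the representative picked by \<open>SOME\<close>.\<close>

definition eval_at_zero :: "((nat \<Rightarrow> 'a) \<times> (nat \<Rightarrow> 'a)) set \<Rightarrow> 'a" where
  "eval_at_zero x = up_ring.coeff P (fst (SOME p. p \<in> x)) 0"

lemma eval_at_zero_frac:
  assumes "f \<in> carrier P" "s \<in> polyA R"
  shows "eval_at_zero (A.frac f s) = up_ring.coeff P f 0"
proof -
  have "\<exists>p. p \<in> A.frac f s" using assms A.rel_refl A.mem_frac by blast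
  then have "((f,s), (SOME p. p \<in> A.frac f s)) \<in> A.rel" using A.mem_frac someI_ex by metis
  then show ?thesis unfolding eval_at_zero_def using loc_rel_coeff_0 by (metis prod.collapse)
qed

lemma eval_at_zero_ring_hom: "ring_hom_ring A.L R eval_at_zero"
proof (rule ring_hom_ringI2[OF cring.axioms(1)[OF A.cring_localization] R.ring_axioms])
  show "eval_at_zero \<in> ring_hom A.L R"
  proof (rule ring_hom_memI)
    fix x y assume "x \<in> carrier A.L" "y \<in> carrier A.L"
    then obtain f s g t where h: "f \<in> carrier P" "s \<in> polyA R" "x = A.frac f s"
      "g \<in> carrier P" "t \<in> polyA R" "y = A.frac g t" by (metis A.localization_cases)
    then have c: "s \<in> carrier P" "t \<in> carrier P" "up_ring.coeff P s 0 = \<one>" "up_ring.coeff P t 0 = \<one>"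
      by (simp_all add: mem_polyA_iff)
    show "eval_at_zero (x \<otimes>\<^bsub>A.L\<^esub> y) = eval_at_zero x \<otimes> eval_at_zero y"
      using h c A.mult_mem by (simp add: A.frac_mult eval_at_zero_frac coeff_mult_0 del: coeff_mult)
    show "eval_at_zero (x \<oplus>\<^bsub>A.L\<^esub> y) = eval_at_zero x \<oplus> eval_at_zero y"
      using h c A.mult_mem by (simp add: A.frac_add eval_at_zero_frac coeff_mult_0 del: coeff_mult)
  next
    fix x assume "x \<in> carrier A.L"
    then show "eval_at_zero x \<in> carrier R" by (metis A.localization_cases eval_at_zero_frac coeff_closed)
  next
    show "eval_at_zero \<one>\<^bsub>A.L\<^esub> = \<one>" using A.one_mem by (simp add: A.localization_simps eval_at_zero_frac)
  qed
qed

lemma eval_at_zero_surjective: "eval_at_zero ` carrier A.L = carrier R"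
proof (intro equalityI subsetI)
  fix a assume "a \<in> carrier R"
  then have "eval_at_zero (A.frac (up_ring.monom P a 0) \<one>\<^bsub>P\<^esub>) = a"
    using A.one_mem by (simp add: eval_at_zero_frac)
  moreover have "A.frac (up_ring.monom P a 0) \<one>\<^bsub>P\<^esub> \<in> carrier A.L"
    using \<open>a \<in> carrier R\<close> A.one_mem by (simp add: A.frac_closed)
  ultimately show "a \<in> eval_at_zero ` carrier A.L" by (metis image_eqI)
qed (use ring_hom_closed[OF ring_hom_ring.homh[OF eval_at_zero_ring_hom]] in blast)

lemma residually_noetherian_localization:
  assumes "residually_noetherian R"
  shows "residually_noetherian A.L"
  unfolding residually_noetherian_iff_ascending_chain_condition[OF A.cring_localization]
proof (intro allI impI)
  fix Q assume Q: "primeideal Q A.L"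
  interpret frac: ring_hom_ring P A.L "\<lambda>f. A.frac f \<one>\<^bsub>P\<^esub>" by (rule A.frac_one_ring_hom)
  interpret const: ring_hom_ring R P "\<lambda>a. up_ring.monom P a 0"
    by (rule ring_hom_ringI2[OF R.ring_axioms P.ring_axioms const_ring_hom])
  have q: "primeideal (A.contraction Q) P"
    unfolding A.contraction_def by (rule frac.primeideal_vimage[OF UP_cring Q])
  let ?p = "{a \<in> carrier R. up_ring.monom P a 0 \<in> A.contraction Q}"
  have p: "primeideal ?p R" by (rule const.primeideal_vimage[OF R.is_cring q])
  then have "ascending_chain_condition {I. ideal I R \<and> ?p \<subseteq> I}"
    using assms residually_noetherian_iff_ascending_chain_condition[OF R.is_cring] by blast
  then have polynomial_acc:
    "ascending_chain_condition {J. ideal J P \<and> (\<forall>a\<in>?p. \<forall>d. up_ring.monom P a d \<in> J)}"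
    by (rule ascending_chain_condition_polynomial_ideals[OF primeideal.axioms(1)[OF p]])
  have monom_mem: "up_ring.monom P a d \<in> A.contraction K"
    if "a \<in> ?p" "ideal K A.L" "Q \<subseteq> K" for a d K
  proof -
    have "up_ring.monom P a 0 \<in> A.contraction K" using that unfolding A.contraction_def by blast
    then have "up_ring.monom P a 0 \<otimes>\<^bsub>P\<^esub> up_ring.monom P \<one> d \<in> A.contraction K"
      by (simp add: ideal.I_r_closed[OF A.ideal_contraction[OF that(2)]])
    then show ?thesis using that monom_mult[of a \<one> 0 d] by simp
  qed
  show "ascending_chain_condition {K. ideal K A.L \<and> Q \<subseteq> K}"
  proof (rule ascending_chain_condition_vimage[OF polynomial_acc, where f = A.contraction])
    show "inj_on A.contraction {K. ideal K A.L \<and> Q \<subseteq> K}"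
      by (rule inj_onI) (use A.ideal_subset_if_contraction_subset in \<open>blast intro: equalityI\<close>)
  qed (use A.ideal_contraction monom_mem in \<open>auto simp: A.contraction_def\<close>)
qed

end

theorem mainTheorem3:
  fixes R :: "('a, 'm) ring_scheme"
  assumes "cring R"
  shows "residually_noetherian (localization (UP R) (polyA R)) \<longleftrightarrow> residually_noetherian R"
proof -
  interpret UP_cring R "UP R" using assms by (simp add: UP_cring_def UP_def)
  show ?thesis
    using residually_noetherian_localization residually_noetherian_surjective_image[OF
        eval_at_zero_ring_hom A.cring_localization assms eval_at_zero_surjective]
    by blast
qed

end
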